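(* Let $\mathcal H$ be as in the context, a graded algebra satisfying axioms ($m0$)–($m3$). Then for $f\in C\subseteq P_n$ and $g\in C'\subseteq P_m$ ($C,C'$ connected components), $$M_f\cdot M_g=\sum_{h\in P_{n+m}}|A^h_{f,g}|\,M_h,$$ where $A^h_{f,g}$ is the set of $\zeta\in Sh(C,C')$ such that $\zeta(f,g)\le h$ and such that, whenever $f'\ge f$ in $C$ and $g'\ge g$ in $C'$ satisfy $\zeta(f',g')\le h$, we have $f'=f$ and $g'=g$. In particular the structure constants are nonnegative integers.
   Context: For each $n\ge0$ let $P_n$ be a finite poset; connected components of $P_n$ are those of its Hasse diagram. $\mathcal H=\bigoplus_n\mathcal H_n$ is a graded vector space with $\mathcal H_n$ having basis $\{F_f:f\in P_n\}$, and the basis $\{M_f\}$ is defined by $F_f=\sum_{g\in P_n,\,g\ge f}M_g$. A shuffle on components $C\subseteq P_n$, $C'\subseteq P_m$ is a function $\zeta:C\times C'\to P_{n+m}$. Assume that for each ordered pair of components $(C,C')$ there is a set $Sh(C,C')$ of shuffles such that: ($m0$) any two elements in the same connected component of $P_n$ have a least upper bound $\vee$; ($m1$) $\mathcal H$ is an algebra and $F_fF_g=\sum_{\zeta\in Sh(C,C')}F_{\zeta(f,g)}$ for $f\in C$, $g\in C'$; ($m2$) for $f\le f'$ in $C$, $g\le g'$ in $C'$ and $\zeta\in Sh(C,C')$, $\zeta(f,g)\le\zeta(f',g')$; ($m3$) for $f_1,f_2\in C$, $g_1,g_2\in C'$ and $\zeta\in Sh(C,C')$, $\zeta(f_1\vee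 f_2,g_1\vee g_2)\le\zeta(f_1,g_1)\vee\zeta(f_2,g_2)$. *)

theory Defs
  imports Main "HOL.Vector_Spaces" "HOL-Library.FuncSet"
begin

definition covers :: "('a \<Rightarrow> 'a \<Rightarrow> bool) \<Rightarrow> 'a set \<Rightarrow> 'a \<Rightarrow> 'a \<Rightarrow> bool" where
  "covers le P x y \<longleftrightarrow> x \<in> P \<and> y \<in> P \<and> le x y \<and> x \<noteq> y \<and>
     \<not> (\<exists>z\<in>P. le x z \<and> le z y \<and> z \<noteq> x \<and> z \<noteq> y)"

definition hasse_rel :: "('a \<Rightarrow> 'a \<Rightarrow> bool) \<Rightarrow> 'a set \<Rightarrow> ('a \<times> 'a) set" where
  "hasse_rel le P = {(x, y). covers le P x y}"

definition is_component :: "('a \<Rightarrow> 'a \<Rightarrow> bool) \<Rightarrow> 'a set \<Rightarrow> 'a set \<Rightarrow> bool" where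
  "is_component le P C \<longleftrightarrow> C \<in> P // ((hasse_rel le P \<union> (hasse_rel le P)\<inverse>)\<^sup>*)"

definition partial_order_on_set :: "('a \<Rightarrow> 'a \<Rightarrow> bool) \<Rightarrow> 'a set \<Rightarrow> bool" where
  "partial_order_on_set le P \<longleftrightarrow>
     (\<forall>x\<in>P. le x x) \<and>
     (\<forall>x\<in>P. \<forall>y\<in>P. le x y \<and> le y x \<longrightarrow> x = y) \<and>
     (\<forall>x\<in>P. \<forall>y\<in>P. \<forall>z\<in>P. le x y \<and> le y z \<longrightarrow> le x z)"

definition is_lub :: "('a \<Rightarrow> 'a \<Rightarrow> bool) \<Rightarrow> 'a set \<Rightarrow> 'a \<Rightarrow> 'a \<Rightarrow> 'a \<Rightarrow> bool" where
  "is_lub le P x y z \<longleftrightarrow> z \<in> P \<and> le x z \<and> le y z \<and> (\<forall>w\<in>P. le x w \<and> le y w \<longrightarrow> le z w)"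

definition join :: "('a \<Rightarrow> 'a \<Rightarrow> bool) \<Rightarrow> 'a set \<Rightarrow> 'a \<Rightarrow> 'a \<Rightarrow> 'a" where
  "join le P x y = (THE z. is_lub le P x y z)"

definition Aset :: "('a \<Rightarrow> 'a \<Rightarrow> bool) \<Rightarrow> ('a set \<Rightarrow> 'a set \<Rightarrow> ('a \<times> 'a \<Rightarrow> 'a) set)
    \<Rightarrow> 'a set \<Rightarrow> 'a set \<Rightarrow> 'a \<Rightarrow> 'a \<Rightarrow> 'a \<Rightarrow> ('a \<times> 'a \<Rightarrow> 'a) set" where
  "Aset le Sh C C' f g h = {\<zeta> \<in> Sh C C'. le (\<zeta> (f, g)) h \<and>
      (\<forall>f'\<in>C. \<forall>g'\<in>C'. le f f' \<and> le g g' \<and> le (\<zeta> (f', g')) h \<longrightarrow> f' = f \<and> g' = g)}"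

end

theory Submission
  imports Defs
begin

text \<open>
  Write \<open>U(f, g)\<close> for the up-set of \<open>(f, g)\<close> in the product order on \<open>C \<times> C'\<close>. Expanding both
  factors, \<open>F f F g\<close> is the sum of \<open>M f' M g'\<close> over \<open>U(f, g)\<close>; by (m1) it is also the sum over
  shuffles \<open>\<zeta>\<close> and over \<open>h \<ge> \<zeta>(f, g)\<close> of \<open>M h\<close>. For fixed \<open>\<zeta>\<close> and \<open>h\<close>, (m0) and (m3) make the
  pairs \<open>p\<close> with \<open>\<zeta> p \<le> h\<close> a directed set, so it has at most one maximal element, and by (m2)
  that element lies in \<open>U(f, g)\<close> exactly when \<open>\<zeta>(f, g) \<le> h\<close>. Hence the claimed right-hand side,
  summed over \<open>U(f, g)\<close>, also gives \<open>F f F g\<close>; as this holds for every pair, Moebius inversion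
  on the finite poset \<open>C \<times> C'\<close> identifies it with \<open>M f M g\<close>.
\<close>

lemma partial_order_on_setD:
  assumes "partial_order_on_set le P"
  shows "x \<in> P \<Longrightarrow> le x x"
    and "x \<in> P \<Longrightarrow> y \<in> P \<Longrightarrow> le x y \<Longrightarrow> le y x \<Longrightarrow> x = y"
    and "x \<in> P \<Longrightarrow> y \<in> P \<Longrightarrow> z \<in> P \<Longrightarrow> le x y \<Longrightarrow> le y z \<Longrightarrow> le x z"
  using assms unfolding partial_order_on_set_def by blast+

lemma partial_order_on_setI:
  assumes "\<And>x. x \<in> P \<Longrightarrow> le x x"
    and "\<And>x y. x \<in> P \<Longrightarrow> y \<in> P \<Longrightarrow> le x y \<Longrightarrow> le y x \<Longrightarrow> x = y"
    and "\<And>x y z. x \<in> P \<Longrightarrow> y \<in> P \<Longrightarrow> z \<in> P \<Longrightarrow> le x y \<Longrightarrow> le y z \<Longrightarrow> le x z"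
  shows "partial_order_on_set le P"
  using assms unfolding partial_order_on_set_def by blast

lemma partial_order_on_set_subset:
  "partial_order_on_set le P \<Longrightarrow> Q \<subseteq> P \<Longrightarrow> partial_order_on_set le Q"
  unfolding partial_order_on_set_def by blast

lemma join_eq:
  assumes "partial_order_on_set le P" "is_lub le P x y z"
  shows "join le P x y = z"
  unfolding join_def
proof (rule the_equality)
  fix z' assume "is_lub le P x y z'"
  with assms show "z' = z"
    unfolding is_lub_def using partial_order_on_setD(2)[OF assms(1)] by blast
qed fact

lemma le_imp_rtrancl_hasse_rel:
  assumes fin: "finite P" and po: "partial_order_on_set le P"
  shows "x \<in> P \<Longrightarrow> y \<in> P \<Longrightarrow> le x y \<Longrightarrow> (x, y) \<in> (hasse_rel le P)\<^sup>*"
proof (induction "card {w \<in> P. le x w \<and> le w y}" arbitrary: x y rule: less_induct)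
  case less
  note refl = partial_order_on_setD(1)[OF po] and antisym = partial_order_on_setD(2)[OF po]
    and trans = partial_order_on_setD(3)[OF po]
  consider "x = y" | "covers le P x y" | z where "z \<in> P" "le x z" "le z y" "z \<noteq> x" "z \<noteq> y"
    using less.prems unfolding covers_def by blast
  then show ?case
  proof cases
    case 3
    have "card {w \<in> P. le x w \<and> le w z} < card {w \<in> P. le x w \<and> le w y}"
    proof (rule psubset_card_mono)
      show "{w \<in> P. le x w \<and> le w z} \<subset> {w \<in> P. le x w \<and> le w y}"
        using 3 less.prems refl antisym trans[of _ z y] by blast
    qed (use fin in simp)
    then have "(x, z) \<in> (hasse_rel le P)\<^sup>*" using less.hyps less.prems 3 by blast
    moreover have "card {w \<in> P. le z w \<and> le w y} < card {w \<in> P. le x w \<and> le w y}"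
    proof (rule psubset_card_mono)
      show "{w \<in> P. le z w \<and> le w y} \<subset> {w \<in> P. le x w \<and> le w y}"
        using 3 less.prems refl antisym trans[of x z] by blast
    qed (use fin in simp)
    then have "(z, y) \<in> (hasse_rel le P)\<^sup>*" using less.hyps less.prems 3 by blast
    ultimately show ?thesis by (rule rtrancl_trans)
  qed (auto simp: hasse_rel_def)
qed

lemma component_subset:
  assumes "is_component le P D"
  shows "D \<subseteq> P"
proof
  fix x assume "x \<in> D"
  from assms obtain c where c: "c \<in> P" "D = (hasse_rel le P \<union> (hasse_rel le P)\<inverse>)\<^sup>* `` {c}"
    unfolding is_component_def by (auto elim: quotientE)
  with \<open>x \<in> D\<close> have "(c, x) \<in> (hasse_rel le P \<union> (hasse_rel le P)\<inverse>)\<^sup>*" by auto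
  then show "x \<in> P"
    using c(1) by (induction rule: rtrancl_induct) (auto simp: hasse_rel_def covers_def)
qed

lemma component_closed_comparable:
  assumes D: "is_component le P D" and "finite P" "partial_order_on_set le P"
    and "x \<in> D" "y \<in> P" "le x y \<or> le y x"
  shows "y \<in> D"
proof -
  let ?E = "(hasse_rel le P \<union> (hasse_rel le P)\<inverse>)\<^sup>*"
  have "x \<in> P" using component_subset[OF D] assms(4) by blast
  then have "(x, y) \<in> (hasse_rel le P)\<^sup>* \<or> (y, x) \<in> (hasse_rel le P)\<^sup>*"
    using le_imp_rtrancl_hasse_rel[OF assms(2,3)] assms(5,6) by blast
  then have "(x, y) \<in> (hasse_rel le P)\<^sup>* \<or> (x, y) \<in> ((hasse_rel le P)\<inverse>)\<^sup>*"
    by (simp add: rtrancl_converse)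
  then have xy: "(x, y) \<in> ?E" by (rule in_rtrancl_UnI)
  obtain c where c: "D = ?E `` {c}"
    using D unfolding is_component_def by (auto elim: quotientE)
  with assms(4) have "(c, x) \<in> ?E" by blast
  then have "(c, y) \<in> ?E" using xy by (rule rtrancl_trans)
  then show ?thesis using c by blast
qed

lemma ex_component_containing:
  "h \<in> P \<Longrightarrow> \<exists>D. is_component le P D \<and> h \<in> D"
  unfolding is_component_def by (auto intro: quotientI)

definition prod_le :: "('a \<Rightarrow> 'a \<Rightarrow> bool) \<Rightarrow> ('b \<Rightarrow> 'b \<Rightarrow> bool) \<Rightarrow> 'a \<times> 'b \<Rightarrow> 'a \<times> 'b \<Rightarrow> bool" where
  "prod_le le1 le2 p q \<longleftrightarrow> le1 (fst p) (fst q) \<and> le2 (snd p) (snd q)"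

lemma partial_order_on_set_prod_le:
  assumes A: "partial_order_on_set le1 A" and B: "partial_order_on_set le2 B"
  shows "partial_order_on_set (prod_le le1 le2) (A \<times> B)"
proof (rule partial_order_on_setI)
  fix p q r assume "p \<in> A \<times> B" "q \<in> A \<times> B" "r \<in> A \<times> B"
  then have "fst p \<in> A" "fst q \<in> A" "fst r \<in> A" "snd p \<in> B" "snd q \<in> B" "snd r \<in> B"
    by auto
  note A' = partial_order_on_setD[OF A] and B' = partial_order_on_setD[OF B]
  show "prod_le le1 le2 p p" unfolding prod_le_def using A'(1) B'(1) \<open>fst p \<in> A\<close> \<open>snd p \<in> B\<close> by blast
  show "prod_le le1 le2 p q \<Longrightarrow> prod_le le1 le2 q p \<Longrightarrow> p = q"
    unfolding prod_le_def using A'(2) B'(2) \<open>fst p \<in> A\<close> \<open>fst q \<in> A\<close> \<open>snd p \<in> B\<close> \<open>snd q \<in> B\<close>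
    by (simp add: prod_eq_iff)
  show "prod_le le1 le2 p q \<Longrightarrow> prod_le le1 le2 q r \<Longrightarrow> prod_le le1 le2 p r"
    unfolding prod_le_def using A'(3) B'(3) \<open>fst p \<in> A\<close> \<open>fst q \<in> A\<close> \<open>fst r \<in> A\<close>
      \<open>snd p \<in> B\<close> \<open>snd q \<in> B\<close> \<open>snd r \<in> B\<close> by blast
qed

definition maximal_in :: "('a \<Rightarrow> 'a \<Rightarrow> bool) \<Rightarrow> 'a set \<Rightarrow> 'a \<Rightarrow> bool" where
  "maximal_in le T q \<longleftrightarrow> q \<in> T \<and> (\<forall>r\<in>T. le q r \<longrightarrow> r = q)"

lemma finite_directed_has_greatest:
  assumes "finite T" "T \<noteq> {}" "partial_order_on_set le T"
    and directed: "\<And>p q. p \<in> T \<Longrightarrow> q \<in> T \<Longrightarrow> \<exists>r\<in>T. le p r \<and> le q r"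
  shows "\<exists>g\<in>T. \<forall>t\<in>T. le t g"
proof -
  have "\<exists>g\<in>T. \<forall>t\<in>S. le t g" if "S \<subseteq> T" "S \<noteq> {}" for S
    using finite_subset[OF that(1) assms(1)] that(2,1)
  proof (induction S rule: finite_ne_induct)
    case (singleton x)
    then show ?case using partial_order_on_setD(1)[OF assms(3)] by blast
  next
    case (insert x S)
    then obtain g where "g \<in> T" "\<forall>t\<in>S. le t g" by blast
    moreover obtain r where "r \<in> T" "le x r" "le g r"
      using directed[of x g] insert.prems \<open>g \<in> T\<close> by blast
    ultimately show ?case
      using partial_order_on_setD(3)[OF assms(3)] insert.prems by blast
  qed
  then show ?thesis using assms(2) by blast
qed

lemma card_maximal_sublevel_above:
  fixes lq :: "'b \<Rightarrow> 'b \<Rightarrow> bool" and le :: "'c \<Rightarrow> 'c \<Rightarrow> bool"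
  assumes "finite Q" and po_Q: "partial_order_on_set lq Q" and po_R: "partial_order_on_set le R"
    and "\<zeta> ` Q \<subseteq> R" "h \<in> R"
    and mono: "\<And>p q. p \<in> Q \<Longrightarrow> q \<in> Q \<Longrightarrow> lq p q \<Longrightarrow> le (\<zeta> p) (\<zeta> q)"
    and directed: "\<And>p q. p \<in> Q \<Longrightarrow> q \<in> Q \<Longrightarrow> le (\<zeta> p) h \<Longrightarrow> le (\<zeta> q) h \<Longrightarrow>
                     \<exists>r\<in>Q. lq p r \<and> lq q r \<and> le (\<zeta> r) h"
    and "p \<in> Q"
  shows "card {q \<in> Q. lq p q \<and> maximal_in lq {q \<in> Q. le (\<zeta> q) h} q} = (if le (\<zeta> p) h then 1 else 0)"
proof (cases "le (\<zeta> p) h")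
  case True
  define T where "T = {q \<in> Q. le (\<zeta> q) h}"
  have po_T: "partial_order_on_set lq T"
    unfolding T_def by (rule partial_order_on_set_subset[OF po_Q]) blast
  have "finite T" using \<open>finite Q\<close> T_def by simp
  moreover have "T \<noteq> {}" using True \<open>p \<in> Q\<close> T_def by blast
  moreover have "\<exists>r\<in>T. lq s r \<and> lq t r" if "s \<in> T" "t \<in> T" for s t
    using directed[of s t] that unfolding T_def by auto
  ultimately obtain g where g: "g \<in> T" and greatest: "\<forall>t\<in>T. lq t g"
    using finite_directed_has_greatest[OF _ _ po_T] by blast
  have "maximal_in lq T q \<longleftrightarrow> q = g" for q
    using g greatest partial_order_on_setD(2)[OF po_T] unfolding maximal_in_def by blast
  moreover have "lq p g" using greatest True \<open>p \<in> Q\<close> T_def by blast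
  ultimately have "{q \<in> Q. lq p q \<and> maximal_in lq T q} = {g}" using g T_def by blast
  then show ?thesis using True T_def by simp
next
  case False
  have "le (\<zeta> p) h" if "q \<in> Q" "lq p q" "le (\<zeta> q) h" for q
  proof (rule partial_order_on_setD(3)[OF po_R])
    show "le (\<zeta> p) (\<zeta> q)" using mono[OF \<open>p \<in> Q\<close>] that by blast
  qed (use assms(4,5,8) that in auto)
  then have "{q \<in> Q. lq p q \<and> maximal_in lq {q \<in> Q. le (\<zeta> q) h} q} = {}"
    using False unfolding maximal_in_def by blast
  then have "card {q \<in> Q. lq p q \<and> maximal_in lq {q \<in> Q. le (\<zeta> q) h} q} = 0"
    by (simp only: card.empty)
  then show ?thesis using False by simp
qed

text \<open>The uniqueness half of Moebius inversion.\<close>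

lemma upset_sums_eq_imp_eq:
  fixes u v :: "'b \<Rightarrow> 'c::ab_group_add"
  assumes fin: "finite Q" and po: "partial_order_on_set lq Q"
    and sums: "\<And>p. p \<in> Q \<Longrightarrow> (\<Sum>q\<in>{q \<in> Q. lq p q}. u q) = (\<Sum>q\<in>{q \<in> Q. lq p q}. v q)"
  shows "p \<in> Q \<Longrightarrow> u p = v p"
proof (induction "card {q \<in> Q. lq p q}" arbitrary: p rule: less_induct)
  case less
  let ?U = "{q \<in> Q. lq p q}"
  have p: "p \<in> ?U" using less.prems partial_order_on_setD(1)[OF po] by blast
  have "u q = v q" if "q \<in> ?U - {p}" for q
  proof (rule less.hyps)
    have q: "q \<in> Q" "lq p q" "q \<noteq> p" using that by auto
    have "{r \<in> Q. lq q r} \<subseteq> ?U"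
      using q less.prems partial_order_on_setD(3)[OF po] by blast
    moreover have "p \<notin> {r \<in> Q. lq q r}"
      using q less.prems partial_order_on_setD(2)[OF po] by blast
    ultimately show "card {r \<in> Q. lq q r} < card ?U"
      using p fin by (intro psubset_card_mono) auto
  qed (use that in blast)
  then have "(\<Sum>q\<in>?U - {p}. u q) = (\<Sum>q\<in>?U - {p}. v q)" by (rule sum.cong[OF refl])
  moreover have "(\<Sum>q\<in>?U. u q) = (\<Sum>q\<in>?U. v q)" using sums less.prems .
  ultimately show ?case
    using fin by (simp add: sum.remove[OF _ p])
qed

lemma sum_swap3:
  "(\<Sum>a\<in>A. \<Sum>b\<in>B. \<Sum>c\<in>C. G a b c) = (\<Sum>c\<in>C. \<Sum>b\<in>B. \<Sum>a\<in>A. (G a b c :: 'x::comm_monoid_add))"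
proof -
  have "(\<Sum>a\<in>A. \<Sum>b\<in>B. \<Sum>c\<in>C. G a b c) = (\<Sum>a\<in>A. \<Sum>c\<in>C. \<Sum>b\<in>B. G a b c)"
    by (rule sum.cong[OF refl], rule sum.swap)
  also have "\<dots> = (\<Sum>c\<in>C. \<Sum>a\<in>A. \<Sum>b\<in>B. G a b c)" by (rule sum.swap)
  also have "\<dots> = (\<Sum>c\<in>C. \<Sum>b\<in>B. \<Sum>a\<in>A. G a b c)" by (rule sum.cong[OF refl], rule sum.swap)
  finally show ?thesis .
qed

subsection \<open>Shuffles on graded posets\<close>

locale graded_shuffle_posets =
  fixes P :: "nat \<Rightarrow> 'a set" and le :: "'a \<Rightarrow> 'a \<Rightarrow> bool"
    and Sh :: "'a set \<Rightarrow> 'a set \<Rightarrow> ('a \<times> 'a \<Rightarrow> 'a) set"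
  assumes finite_P: "\<And>k. finite (P k)"
    and po: "\<And>k. partial_order_on_set le (P k)"
    and Sh_fun: "\<And>k l D D'. is_component le (P k) D \<Longrightarrow> is_component le (P l) D' \<Longrightarrow>
                  Sh D D' \<subseteq> (D \<times> D' \<rightarrow>\<^sub>E P (k + l))"
    and m0: "\<And>k D x y. is_component le (P k) D \<Longrightarrow> x \<in> D \<Longrightarrow> y \<in> D \<Longrightarrow>
                  \<exists>z. is_lub le (P k) x y z"
    and m2: "\<And>k l D D' x x' y y' \<zeta>. is_component le (P k) D \<Longrightarrow> is_component le (P l) D' \<Longrightarrow>
                  x \<in> D \<Longrightarrow> x' \<in> D \<Longrightarrow> y \<in> D' \<Longrightarrow> y' \<in> D' \<Longrightarrow> le x x' \<Longrightarrow> le y y' \<Longrightarrow>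
                  \<zeta> \<in> Sh D D' \<Longrightarrow> le (\<zeta> (x, y)) (\<zeta> (x', y'))"
    and m3: "\<And>k l D D' x1 x2 y1 y2 \<zeta>. is_component le (P k) D \<Longrightarrow> is_component le (P l) D' \<Longrightarrow>
                  x1 \<in> D \<Longrightarrow> x2 \<in> D \<Longrightarrow> y1 \<in> D' \<Longrightarrow> y2 \<in> D' \<Longrightarrow> \<zeta> \<in> Sh D D' \<Longrightarrow>
                  le (\<zeta> (join le (P k) x1 x2, join le (P l) y1 y2))
                     (join le (P (k + l)) (\<zeta> (x1, y1)) (\<zeta> (x2, y2)))"
begin

lemma upper_bounds_in_component:
  "is_component le (P k) D \<Longrightarrow> x \<in> D \<Longrightarrow> y \<in> P k \<Longrightarrow> le x y \<Longrightarrow> y \<in> D"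
  using component_closed_comparable[OF _ finite_P po, of k D x y] by blast

lemma is_lub_join:
  assumes "is_component le (P k) D" "x \<in> D" "y \<in> D"
  shows "is_lub le (P k) x y (join le (P k) x y)"
proof -
  obtain z where "is_lub le (P k) x y z" using m0[OF assms] by blast
  then show ?thesis using join_eq[OF po] by simp
qed

lemma join_mem_component:
  assumes "is_component le (P k) D" "x \<in> D" "y \<in> D"
  shows "join le (P k) x y \<in> D"
  using is_lub_join[OF assms] upper_bounds_in_component[OF assms(1,2)] unfolding is_lub_def by blast

lemma join_le_common_upper_bound:
  assumes "u \<in> P k" "v \<in> P k" "h \<in> P k" "le u h" "le v h"
  shows "join le (P k) u v \<in> P k \<and> le (join le (P k) u v) h"
proof -
  obtain D where D: "is_component le (P k) D" "h \<in> D"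
    using ex_component_containing[OF assms(3)] by blast
  have "u \<in> D" "v \<in> D"
    using component_closed_comparable[OF D(1) finite_P po D(2)] assms(1,2,4,5) by blast+
  then show ?thesis using is_lub_join[OF D(1)] assms unfolding is_lub_def by blast
qed

context
  fixes n m :: nat and C C' :: "'a set"
  assumes C: "is_component le (P n) C" and C': "is_component le (P m) C'"
begin

lemma finite_component_pairs: "finite (C \<times> C')"
  using finite_subset[OF component_subset[OF C] finite_P]
    finite_subset[OF component_subset[OF C'] finite_P] by blast

lemma partial_order_on_component_pairs: "partial_order_on_set (prod_le le le) (C \<times> C')"
  using partial_order_on_set_subset[OF po component_subset[OF C]]
    partial_order_on_set_subset[OF po component_subset[OF C']]
  by (rule partial_order_on_set_prod_le)

lemma finite_Sh: "finite (Sh C C')"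
proof (rule finite_subset[OF Sh_fun[OF C C']])
  show "finite (C \<times> C' \<rightarrow>\<^sub>E P (n + m))"
    using finite_component_pairs finite_P by (intro finite_PiE) auto
qed

lemma shuffle_mem_P: "\<zeta> \<in> Sh C C' \<Longrightarrow> q \<in> C \<times> C' \<Longrightarrow> \<zeta> q \<in> P (n + m)"
  using Sh_fun[OF C C'] by blast

lemma shuffle_mono:
  "\<zeta> \<in> Sh C C' \<Longrightarrow> p \<in> C \<times> C' \<Longrightarrow> q \<in> C \<times> C' \<Longrightarrow> prod_le le le p q \<Longrightarrow> le (\<zeta> p) (\<zeta> q)"
  using m2[OF C C', of "fst p" "fst q" "snd p" "snd q" \<zeta>] by (auto simp: prod_le_def)

lemma sublevel_directed:
  assumes \<zeta>: "\<zeta> \<in> Sh C C'" and h: "h \<in> P (n + m)"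
    and p: "p \<in> C \<times> C'" "le (\<zeta> p) h" and q: "q \<in> C \<times> C'" "le (\<zeta> q) h"
  shows "\<exists>r\<in>C \<times> C'. prod_le le le p r \<and> prod_le le le q r \<and> le (\<zeta> r) h"
proof -
  obtain a b a' b' where ab: "p = (a, b)" "q = (a', b')" by fastforce
  define r where "r = (join le (P n) a a', join le (P m) b b')"
  have r: "r \<in> C \<times> C'" using join_mem_component C C' p q ab unfolding r_def by auto
  moreover have "prod_le le le p r \<and> prod_le le le q r"
    using is_lub_join[OF C] is_lub_join[OF C'] p q ab unfolding r_def prod_le_def is_lub_def by auto
  moreover have "le (\<zeta> r) h"
  proof -
    let ?j = "join le (P (n + m)) (\<zeta> p) (\<zeta> q)"
    have "le (\<zeta> r) ?j" using m3[OF C C' _ _ _ _ \<zeta>] p q ab unfolding r_def by auto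
    moreover have "?j \<in> P (n + m) \<and> le ?j h"
      using join_le_common_upper_bound shuffle_mem_P[OF \<zeta>] p q h by blast
    ultimately show ?thesis
      using partial_order_on_setD(3)[OF po] shuffle_mem_P[OF \<zeta> r] h by blast
  qed
  ultimately show ?thesis by blast
qed

lemma mem_Aset_iff:
  assumes "a \<in> C" "b \<in> C'"
  shows "\<zeta> \<in> Aset le Sh C C' a b h \<longleftrightarrow>
    \<zeta> \<in> Sh C C' \<and> maximal_in (prod_le le le) {q \<in> C \<times> C'. le (\<zeta> q) h} (a, b)"
  using assms unfolding Aset_def maximal_in_def prod_le_def by auto

lemma card_Aset_above:
  assumes \<zeta>: "\<zeta> \<in> Sh C C'" and h: "h \<in> P (n + m)" and p: "p \<in> C \<times> C'"
  shows "card {q \<in> C \<times> C'. prod_le le le p q \<and> \<zeta> \<in> Aset le Sh C C' (fst q) (snd q) h}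
    = (if le (\<zeta> p) h then 1 else 0)"
proof -
  have "{q \<in> C \<times> C'. prod_le le le p q \<and> \<zeta> \<in> Aset le Sh C C' (fst q) (snd q) h} =
    {q \<in> C \<times> C'. prod_le le le p q \<and> maximal_in (prod_le le le) {q \<in> C \<times> C'. le (\<zeta> q) h} q}"
    using mem_Aset_iff \<zeta> by auto
  also have "card \<dots> = (if le (\<zeta> p) h then 1 else 0)"
    using finite_component_pairs partial_order_on_component_pairs po shuffle_mem_P[OF \<zeta>] h
      shuffle_mono[OF \<zeta>] sublevel_directed[OF \<zeta> h] p
    by (intro card_maximal_sublevel_above[where R = "P (n + m)"]) auto
  finally show ?thesis .
qed

end

end

locale shuffle_algebra = graded_shuffle_posets P le Sh
  for P :: "nat \<Rightarrow> 'a set" and le and Sh +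
  fixes F M :: "'a \<Rightarrow> 'h::ring_1"
  assumes M_def: "\<And>k x. x \<in> P k \<Longrightarrow> F x = (\<Sum>y\<in>{y \<in> P k. le x y}. M y)"
    and m1: "\<And>k l D D' x y. is_component le (P k) D \<Longrightarrow> is_component le (P l) D' \<Longrightarrow>
                  x \<in> D \<Longrightarrow> y \<in> D' \<Longrightarrow> F x * F y = (\<Sum>\<zeta>\<in>Sh D D'. F (\<zeta> (x, y)))"
begin

lemma F_eq_sum_component:
  assumes "is_component le (P k) D" "x \<in> D"
  shows "F x = (\<Sum>a\<in>{a \<in> D. le x a}. M a)"
proof -
  have "{a \<in> P k. le x a} = {a \<in> D. le x a}"
    using upper_bounds_in_component[OF assms] component_subset[OF assms(1)] by blast
  then show ?thesis using M_def assms component_subset by (metis subsetD)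
qed

context
  fixes n m :: nat and C C' :: "'a set"
  assumes C: "is_component le (P n) C" and C': "is_component le (P m) C'"
begin

lemma F_mult_F_eq_sum_upset:
  assumes "x \<in> C" "y \<in> C'"
  shows "F x * F y = (\<Sum>q\<in>{q \<in> C \<times> C'. prod_le le le (x, y) q}. M (fst q) * M (snd q))"
proof -
  have "{q \<in> C \<times> C'. prod_le le le (x, y) q} = {a \<in> C. le x a} \<times> {b \<in> C'. le y b}"
    by (auto simp: prod_le_def)
  then show ?thesis
    by (simp add: F_eq_sum_component[OF C assms(1)] F_eq_sum_component[OF C' assms(2)]
        sum_product sum.cartesian_product case_prod_beta')
qed

lemma F_mult_F_eq_sum_upset_Aset:
  assumes x: "x \<in> C" and y: "y \<in> C'"
  defines "U \<equiv> {q \<in> C \<times> C'. prod_le le le (x, y) q}"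
  shows "F x * F y =
    (\<Sum>q\<in>U. \<Sum>h\<in>P (n + m). of_nat (card (Aset le Sh C C' (fst q) (snd q) h)) * M h)"
proof -
  let ?A = "\<lambda>q h. Aset le Sh C C' (fst q) (snd q) h"
  have "F x * F y = (\<Sum>\<zeta>\<in>Sh C C'. F (\<zeta> (x, y)))" by (rule m1[OF C C' x y])
  also have "\<dots> = (\<Sum>\<zeta>\<in>Sh C C'. \<Sum>h\<in>P (n + m). if le (\<zeta> (x, y)) h then M h else 0)"
    by (intro sum.cong refl)
      (simp add: M_def[OF shuffle_mem_P[OF C C' _ SigmaI[OF x y]]] sum.inter_filter[OF finite_P])
  also have "\<dots> = (\<Sum>\<zeta>\<in>Sh C C'. \<Sum>h\<in>P (n + m). \<Sum>q\<in>U. if \<zeta> \<in> ?A q h then M h else 0)"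
    using finite_component_pairs[OF C C'] card_Aset_above[OF C C' _ _ SigmaI[OF x y]]
    by (intro sum.cong refl) (simp add: U_def sum.inter_filter[symmetric])
  also have "\<dots> = (\<Sum>q\<in>U. \<Sum>h\<in>P (n + m). \<Sum>\<zeta>\<in>Sh C C'. if \<zeta> \<in> ?A q h then M h else 0)"
    by (rule sum_swap3)
  also have "\<dots> = (\<Sum>q\<in>U. \<Sum>h\<in>P (n + m). of_nat (card (?A q h)) * M h)"
    using finite_Sh[OF C C']
    by (intro sum.cong refl) (simp add: sum.inter_filter[symmetric] Aset_def)
  finally show ?thesis .
qed

theorem M_mult_M:
  assumes "x \<in> C" "y \<in> C'"
  shows "M x * M y = (\<Sum>h\<in>P (n + m). of_nat (card (Aset le Sh C C' x y h)) * M h)"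
proof -
  let ?coeff = "\<lambda>q. \<Sum>h\<in>P (n + m). of_nat (card (Aset le Sh C C' (fst q) (snd q) h)) * M h"
  have "M (fst q) * M (snd q) = ?coeff q" if "q \<in> C \<times> C'" for q
  proof (rule upset_sums_eq_imp_eq[OF finite_component_pairs[OF C C']
        partial_order_on_component_pairs[OF C C'] _ that])
    fix p assume "p \<in> C \<times> C'"
    then show "(\<Sum>q\<in>{q \<in> C \<times> C'. prod_le le le p q}. M (fst q) * M (snd q)) =
        (\<Sum>q\<in>{q \<in> C \<times> C'. prod_le le le p q}. ?coeff q)"
      using F_mult_F_eq_sum_upset[of "fst p" "snd p"] F_mult_F_eq_sum_upset_Aset[of "fst p" "snd p"]
      by auto
  qed
  then show ?thesis using assms by fastforce
qed

end

end

lemma scale_of_nat: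
  assumes "vector_space scale"
  shows "scale (of_nat k) x = of_nat k * (x :: 'h::ring_1)"
proof -
  interpret vector_space scale by fact
  show ?thesis by (induction k) (simp_all add: scale_left_distrib distrib_right)
qed

theorem mainTheorem15:
  fixes P :: "nat \<Rightarrow> 'a set"
    and le :: "'a \<Rightarrow> 'a \<Rightarrow> bool"
    and scale :: "'k::field \<Rightarrow> 'h::ring_1 \<Rightarrow> 'h"
    and F M :: "'a \<Rightarrow> 'h"
    and Sh :: "'a set \<Rightarrow> 'a set \<Rightarrow> ('a \<times> 'a \<Rightarrow> 'a) set"
    and n m :: nat and C C' :: "'a set" and f g :: 'a
  assumes fin: "\<And>k. finite (P k)"
    and disj: "\<And>k l. k \<noteq> l \<Longrightarrow> P k \<inter> P l = {}"
    and po: "\<And>k. partial_order_on_set le (P k)"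
    and vs: "vector_space scale"
    and bilin: "\<And>c x y. scale c (x * y) = scale c x * y \<and> scale c (x * y) = x * scale c y"
    and F_inj: "inj_on F (\<Union>k. P k)"
    and F_indep: "\<not> module.dependent scale (F ` (\<Union>k. P k))"
    and F_span: "module.span scale (F ` (\<Union>k. P k)) = UNIV"
    and M_def: "\<And>k x. x \<in> P k \<Longrightarrow> F x = (\<Sum>y\<in>{y \<in> P k. le x y}. M y)"
    and Sh_fun: "\<And>k l D D'. is_component le (P k) D \<Longrightarrow> is_component le (P l) D' \<Longrightarrow>
                  Sh D D' \<subseteq> (D \<times> D' \<rightarrow>\<^sub>E P (k + l))"
    and m0: "\<And>k D x y. is_component le (P k) D \<Longrightarrow> x \<in> D \<Longrightarrow> y \<in> D \<Longrightarrow>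
                  \<exists>z. is_lub le (P k) x y z"
    and m1: "\<And>k l D D' x y. is_component le (P k) D \<Longrightarrow> is_component le (P l) D' \<Longrightarrow>
                  x \<in> D \<Longrightarrow> y \<in> D' \<Longrightarrow> F x * F y = (\<Sum>\<zeta>\<in>Sh D D'. F (\<zeta> (x, y)))"
    and m2: "\<And>k l D D' x x' y y' \<zeta>. is_component le (P k) D \<Longrightarrow> is_component le (P l) D' \<Longrightarrow>
                  x \<in> D \<Longrightarrow> x' \<in> D \<Longrightarrow> y \<in> D' \<Longrightarrow> y' \<in> D' \<Longrightarrow> le x x' \<Longrightarrow> le y y' \<Longrightarrow>
                  \<zeta> \<in> Sh D D' \<Longrightarrow> le (\<zeta> (x, y)) (\<zeta> (x', y'))"
    and m3: "\<And>k l D D' x1 x2 y1 y2 \<zeta>. is_component le (P k) D \<Longrightarrow> is_component le (P l) D' \<Longrightarrow>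
                  x1 \<in> D \<Longrightarrow> x2 \<in> D \<Longrightarrow> y1 \<in> D' \<Longrightarrow> y2 \<in> D' \<Longrightarrow> \<zeta> \<in> Sh D D' \<Longrightarrow>
                  le (\<zeta> (join le (P k) x1 x2, join le (P l) y1 y2))
                     (join le (P (k + l)) (\<zeta> (x1, y1)) (\<zeta> (x2, y2)))"
    and C: "is_component le (P n) C" and C': "is_component le (P m) C'"
    and f: "f \<in> C" and g: "g \<in> C'"
  shows "M f * M g = (\<Sum>h\<in>P (n + m). scale (of_nat (card (Aset le Sh C C' f g h))) (M h))"
proof -
  interpret shuffle_algebra P le Sh F M
    by unfold_locales (fact fin po Sh_fun m0 m2 m3 M_def m1)+
  show ?thesis
    using M_mult_M[OF C C' f g] by (simp add: scale_of_nat[OF vs])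
qed

end
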